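(* Let $q$ be a prime power, $N\ge n\ge 1$, and $1\le d\le n$. Then $\chi'_d(N\times n,q)=q^{Nd}$.
   Context: $\mathbb{F}_q^{N\times n}$ is the set of $N\times n$ matrices over the finite field $\mathbb{F}_q$, with rank distance $d_R(M_1,M_2)=\mathrm{Rk}(M_1-M_2)$. A $d$-distance coloring of $\mathbb{F}_q^{N\times n}$ is a map $\Gamma:\mathbb{F}_q^{N\times n}\to\{1,\dots,L\}$ such that $\Gamma(M_1)\ne\Gamma(M_2)$ whenever $M_1\neq M_2$ and $d_R(M_1,M_2)\le d$. $\chi'_d(N\times n,q)$ denotes the minimum number $L$ of colors in a $d$-distance coloring. *)

theory Defs
  imports "HOL-Analysis.Analysis"
begin

text \<open>N x n matrices over a field 'a are elements of type 'a^'n^'m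
  (N = CARD('m) rows, n = CARD('n) columns). Rank distance.\<close>

definition rank_dist :: "'a::field^'n^'m \<Rightarrow> 'a^'n^'m \<Rightarrow> nat" where
  "rank_dist M1 M2 = rank (M1 - M2)"

definition is_dist_coloring :: "nat \<Rightarrow> nat \<Rightarrow> ('a::field^'n^'m \<Rightarrow> nat) \<Rightarrow> bool" where
  "is_dist_coloring d L \<Gamma> \<longleftrightarrow>
     (\<forall>M. \<Gamma> M \<in> {1..L}) \<and>
     (\<forall>M1 M2. M1 \<noteq> M2 \<and> rank_dist M1 M2 \<le> d \<longrightarrow> \<Gamma> M1 \<noteq> \<Gamma> M2)"

definition chi_dist :: "nat \<Rightarrow> ('a::field^'n^'m) itself \<Rightarrow> nat" where
  "chi_dist d _ = (LEAST L. \<exists>\<Gamma> :: 'a^'n^'m \<Rightarrow> nat. is_dist_coloring d L \<Gamma>)"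

end

theory Submission
  imports Defs "HOL-Algebra.Algebraic_Closure_Type"
begin

text \<open>Lower bound: the \<open>q^(N d)\<close> matrices vanishing outside \<open>d\<close> fixed columns are pairwise at
  rank distance at most \<open>d\<close>. Upper bound: a basis over \<open>\<bbbF>\<^sub>q\<close> of the field \<open>K\<close> of order \<open>q^N\<close> turns
  every column of a matrix into an element of \<open>K\<close>. Interpolate the matrix on \<open>n - d\<close> of its
  columns by a \<open>q\<close>-linearized polynomial of \<open>q\<close>-degree below \<open>n - d\<close> and colour it by the residues
  on the other \<open>d\<close> columns, an element of \<open>K^d\<close>. Two matrices of equal colour differ by a
  Gabidulin codeword: its columns are the values of one linearized polynomial at \<open>\<bbbF>\<^sub>q\<close>-independent
  points, so its kernel embeds into the at most \<open>q^(n - d - 1)\<close> roots of that polynomial, and its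
  rank exceeds \<open>d\<close>.\<close>

section \<open>Finite fields\<close>

lemma finite_field_card_ge_2: "CARD('a::{field,finite}) \<ge> 2"
proof -
  have "card {0, 1::'a} \<le> CARD('a)"
    by (rule card_mono) auto
  thus ?thesis
    by simp
qed

lemma finite_field_power_card_eq_self:
  fixes x :: "'a::{field,finite}"
  shows "x ^ CARD('a) = x"
proof (cases "x = 0")
  case True
  thus ?thesis
    using finite_UNIV_card_ge_0[where 'a='a] by simp
next
  case False
  let ?U = "UNIV - {0::'a}"
  have "(\<Prod>y\<in>?U. x * y) = \<Prod>?U"
    by (rule prod.reindex_bij_witness[of _ "\<lambda>y. y / x" "\<lambda>y. x * y"]) (use False in auto)
  moreover have "\<Prod>?U \<noteq> 0"
    by simp
  ultimately have "x ^ card ?U = 1"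
    by (simp add: prod.distrib)
  moreover have "CARD('a) = Suc (card ?U)"
    using finite_UNIV_card_ge_0[where 'a='a] by (simp add: card_Diff_singleton)
  ultimately show ?thesis
    by (metis power_Suc mult_1_right)
qed

lemma finite_field_power_card_power_eq_self:
  "(x :: 'a::{field,finite}) ^ (CARD('a) ^ i) = x"
  by (induction i) (simp_all add: finite_field_power_card_eq_self power_mult)

lemma finite_field_of_nat_card: "of_nat CARD('a::{field,finite}) = (0::'a)"
proof -
  have "(\<Sum>x\<in>UNIV. x + 1) = (\<Sum>x\<in>UNIV. x::'a)"
    by (rule sum.reindex_bij_witness[of _ "\<lambda>x. x - 1" "\<lambda>x. x + 1"]) auto
  thus ?thesis
    by (simp add: sum.distrib)
qed

text \<open>All elements are roots of the polynomial \<open>(X + 1)\<^sup>q - X\<^sup>q - 1\<close>, whose degree is less than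
  the number \<open>q\<close> of elements; so it vanishes, and its coefficients are the inner binomial
  coefficients.\<close>
lemma finite_field_of_nat_card_choose:
  assumes "0 < k" "k < CARD('a::{field,finite})"
  shows "of_nat (CARD('a) choose k) = (0::'a)"
proof -
  define q where "q = CARD('a)"
  have q2: "q \<ge> 2"
    unfolding q_def by (rule finite_field_card_ge_2)
  define R :: "'a poly" where "R = (\<Sum>j\<in>{1..<q}. Polynomial.monom (of_nat (q choose j)) j)"
  have root: "poly R a = 0" for a :: 'a
  proof -
    have "{..q} = insert 0 (insert q {1..<q})"
      using q2 by auto
    hence "(a + 1) ^ q = 1 + (a ^ q + poly R a)"
      using q2 by (simp add: binomial_ring R_def poly_sum poly_monom)
    moreover have "(a + 1) ^ q = a + 1" "a ^ q = a"
      unfolding q_def by (rule finite_field_power_card_eq_self)+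
    ultimately show ?thesis
      by (simp add: algebra_simps)
  qed
  have "R = 0"
  proof (rule ccontr)
    assume "R \<noteq> 0"
    hence "card {x. poly R x = 0} \<le> Polynomial.degree R"
      by (rule card_poly_roots_bound)
    also have "Polynomial.degree R \<le> q - 1"
      unfolding R_def by (rule degree_sum_le) (auto intro: order.trans[OF degree_monom_le])
    finally show False
      using root q2 by (simp add: q_def)
  qed
  moreover have "poly.coeff R k = of_nat (q choose k)"
    unfolding R_def coeff_sum using assms by (simp add: q_def)
  ultimately show ?thesis
    unfolding q_def by simp
qed

lemma add_power_eq_if_choose_vanish:
  fixes x y :: "'b::comm_semiring_1"
  assumes "0 < m" and "\<And>k. 0 < k \<Longrightarrow> k < m \<Longrightarrow> of_nat (m choose k) = (0::'b)"
  shows "(x + y) ^ m = x ^ m + y ^ m"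
proof -
  have "(x + y) ^ m = (\<Sum>k\<in>{0, m}. of_nat (m choose k) * x ^ k * y ^ (m - k))"
    unfolding binomial_ring by (rule sum.mono_neutral_right) (use assms in auto)
  thus ?thesis
    using assms(1) by (simp add: add.commute)
qed

section \<open>The subfield of order \<open>q\<^sup>N\<close> of the algebraic closure\<close>

lemma alg_closure_add_power_card_power:
  fixes x y :: "'a::{field,finite} alg_closure"
  shows "(x + y) ^ (CARD('a) ^ i) = x ^ (CARD('a) ^ i) + y ^ (CARD('a) ^ i)"
proof (induction i arbitrary: x y)
  case (Suc i)
  have "of_nat (CARD('a) choose k) = (0 :: 'a alg_closure)" if "0 < k" "k < CARD('a)" for k
    using to_ac_of_nat[of "CARD('a) choose k", where 'a='a] finite_field_of_nat_card_choose[OF that]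
    by simp
  hence frob: "(u + v) ^ CARD('a) = u ^ CARD('a) + v ^ CARD('a)" for u v :: "'a alg_closure"
    by (intro add_power_eq_if_choose_vanish) simp_all
  show ?case
    by (simp add: power_mult frob Suc)
qed simp

lemma alg_closure_sum_power_card_power:
  fixes f :: "'b \<Rightarrow> 'a::{field,finite} alg_closure"
  shows "(\<Sum>j\<in>A. f j) ^ (CARD('a) ^ i) = (\<Sum>j\<in>A. f j ^ (CARD('a) ^ i))"
  by (induction A rule: infinite_finite_induct) (simp_all add: alg_closure_add_power_card_power)

lemma alg_closure_of_nat_card: "of_nat CARD('a::{field,finite}) = (0::'a alg_closure)"
  using to_ac_of_nat[of "CARD('a)", where 'a='a] finite_field_of_nat_card[where 'a='a] by simp

definition frob_fixed :: "nat \<Rightarrow> 'a::{field,finite} alg_closure set" where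
  "frob_fixed N = {x. x ^ (CARD('a) ^ N) = x}"

lemma to_ac_in_frob_fixed: "to_ac a \<in> frob_fixed N"
proof -
  have "to_ac (a ^ (CARD('a) ^ N)) = to_ac a"
    by (simp only: finite_field_power_card_power_eq_self)
  thus ?thesis
    by (simp add: frob_fixed_def)
qed

lemma frob_fixed_diff:
  assumes "x \<in> frob_fixed N" "y \<in> frob_fixed N"
  shows "x - y \<in> frob_fixed N"
proof -
  have "(x - y) ^ (CARD('a) ^ N) + y = x"
    using assms alg_closure_add_power_card_power[of "x - y" y N] by (simp add: frob_fixed_def)
  thus ?thesis
    by (simp add: frob_fixed_def eq_diff_eq)
qed

lemma frob_fixed_mult: "x \<in> frob_fixed N \<Longrightarrow> y \<in> frob_fixed N \<Longrightarrow> x * y \<in> frob_fixed N"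
  by (simp add: frob_fixed_def power_mult_distrib)

lemma frob_fixed_sum: "(\<And>j. j \<in> A \<Longrightarrow> f j \<in> frob_fixed N) \<Longrightarrow> (\<Sum>j\<in>A. f j) \<in> frob_fixed N"
  unfolding frob_fixed_def by (simp add: alg_closure_sum_power_card_power)

lemma square_dvd_imp_pderiv_root:
  assumes "[:-x, 1:] * [:-x, 1:] dvd (p :: 'b::idom poly)"
  shows "poly p x = 0" and "poly (pderiv p) x = 0"
proof -
  obtain r where p: "p = [:-x, 1:] * ([:-x, 1:] * r)"
    using assms by (metis dvdE mult.assoc)
  have double_root: "poly (u * (u * r)) x = 0 \<and> poly (pderiv (u * (u * r))) x = 0"
    if "poly u x = 0" for u
    using that by (simp add: pderiv_mult)
  have "poly p x = 0 \<and> poly (pderiv p) x = 0"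
    unfolding p by (rule double_root) simp
  thus "poly p x = 0" and "poly (pderiv p) x = 0"
    by simp_all
qed

lemma card_roots_eq_degree_if_separable:
  fixes p :: "'b::alg_closed_field poly"
  assumes "p \<noteq> 0" and separable: "\<And>x. poly p x = 0 \<Longrightarrow> poly (pderiv p) x \<noteq> 0"
  shows "card {x. poly p x = 0} = Polynomial.degree p"
proof (rule antisym)
  show "card {x. poly p x = 0} \<le> Polynomial.degree p"
    by (rule card_poly_roots_bound[OF assms(1)])
  obtain A where A: "size A = Polynomial.degree p"
    "p = Polynomial.smult (Polynomial.lead_coeff p) (\<Prod>x\<in>#A. [:-x, 1:])"
    using alg_closed_imp_factorization[OF assms(1)] by blast
  have simple: "count A x \<le> 1" for x
  proof (rule ccontr)
    assume "\<not> count A x \<le> 1"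
    hence "{#x, x#} \<subseteq># A"
      by (simp add: subseteq_mset_def)
    hence "(\<Prod>y\<in>#{#x, x#}. [:-y, 1:]) dvd (\<Prod>y\<in>#A. [:-y, 1:])"
      by (intro prod_mset_subset_imp_dvd image_mset_subseteq_mono)
    hence "[:-x, 1:] * [:-x, 1:] dvd p"
      by (subst A(2)) (simp add: dvd_smult)
    with separable show False
      using square_dvd_imp_pderiv_root by blast
  qed
  have "count A x = count (mset_set (set_mset A)) x" for x
  proof (cases "x \<in># A")
    case True
    hence "count A x = 1"
      using simple[of x] by (auto simp: le_Suc_eq count_eq_zero_iff)
    thus ?thesis
      using True by simp
  qed (simp add: not_in_iff)
  hence "A = mset_set (set_mset A)"
    by (rule multiset_eqI)
  hence "Polynomial.degree p = card (set_mset A)"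
    by (metis A(1) size_mset_set)
  also have "\<dots> \<le> card {x. poly p x = 0}"
    by (intro card_mono poly_roots_finite assms(1))
       (subst A(2), auto simp: poly_prod_mset prod_mset_zero_iff)
  finally show "Polynomial.degree p \<le> card {x. poly p x = 0}" .
qed

lemma card_frob_fixed:
  assumes "N \<ge> 1"
  shows "finite (frob_fixed N :: 'a::{field,finite} alg_closure set)"
    and "card (frob_fixed N :: 'a alg_closure set) = CARD('a) ^ N"
proof -
  define Q where "Q = CARD('a) ^ N"
  define P :: "'a alg_closure poly" where "P = Polynomial.monom 1 Q - [:0, 1:]"
  have "CARD('a) ^ 1 \<le> Q"
    unfolding Q_def using assms finite_field_card_ge_2[where 'a='a] by (intro power_increasing) auto
  hence "Q \<ge> 2"
    using finite_field_card_ge_2[where 'a='a] by simp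
  have roots: "frob_fixed N = {x. poly P x = 0}"
    by (simp add: frob_fixed_def P_def Q_def poly_monom)
  have lead: "poly.coeff P Q = 1"
    using \<open>Q \<ge> 2\<close> by (simp add: P_def coeff_pCons split: nat.split)
  hence "P \<noteq> 0"
    by auto
  have "Polynomial.degree P \<le> Q"
    unfolding P_def using \<open>Q \<ge> 2\<close>
    by (intro degree_diff_le) (auto intro: degree_monom_le simp: degree_pCons_eq_if)
  moreover have "Q \<le> Polynomial.degree P"
    by (rule le_degree) (simp add: lead)
  ultimately have deg: "Polynomial.degree P = Q"
    by (rule antisym)
  have "of_nat Q = (0 :: 'a alg_closure)"
    using assms alg_closure_of_nat_card[where 'a='a] by (simp add: Q_def power_0_left)
  hence "poly (pderiv P) x = -1" for x
    by (simp add: P_def pderiv_diff pderiv_monom pderiv_pCons poly_monom)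
  thus "finite (frob_fixed N :: 'a alg_closure set)"
    and "card (frob_fixed N :: 'a alg_closure set) = CARD('a) ^ N"
    using roots poly_roots_finite[OF \<open>P \<noteq> 0\<close>] card_roots_eq_degree_if_separable[OF \<open>P \<noteq> 0\<close>]
    by (simp_all add: deg Q_def)
qed

section \<open>Independence over the base field\<close>

definition base_independent :: "('i \<Rightarrow> 'a::field alg_closure) \<Rightarrow> 'i set \<Rightarrow> bool" where
  "base_independent e A \<longleftrightarrow> (\<forall>t. (\<Sum>i\<in>A. to_ac (t i) * e i) = 0 \<longrightarrow> (\<forall>i\<in>A. t i = 0))"

lemma base_independent_zero:
  "base_independent e A \<Longrightarrow> (\<Sum>i\<in>A. to_ac (t i) * e i) = 0 \<Longrightarrow> i \<in> A \<Longrightarrow> t i = 0"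
  unfolding base_independent_def by blast

lemma base_independent_eq:
  assumes "base_independent e A" and "(\<Sum>i\<in>A. to_ac (t i) * e i) = (\<Sum>i\<in>A. to_ac (u i) * e i)"
    and "i \<in> A"
  shows "t i = u i"
proof -
  have "(\<Sum>i\<in>A. to_ac (t i - u i) * e i) = 0"
    using assms(2) by (simp add: left_diff_distrib sum_subtractf)
  from base_independent_zero[OF assms(1) this assms(3)] show ?thesis
    by simp
qed

lemma base_independent_subset:
  assumes "base_independent e A" "B \<subseteq> A" "finite A"
  shows "base_independent e B"
  unfolding base_independent_def
proof (intro allI impI ballI)
  fix t i
  assume "(\<Sum>i\<in>B. to_ac (t i) * e i) = 0" and "i \<in> B"
  moreover have "(\<Sum>i\<in>A. to_ac (if i \<in> B then t i else 0) * e i) = (\<Sum>i\<in>B. to_ac (t i) * e i)"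
    using assms(2,3) by (intro sum.mono_neutral_cong_right) auto
  ultimately show "t i = 0"
    using base_independent_zero[OF assms(1), of "\<lambda>i. if i \<in> B then t i else 0" i] assms(2) by auto
qed

lemma base_independent_comp:
  assumes "base_independent e (\<sigma> ` A)" "inj_on \<sigma> A"
  shows "base_independent (e \<circ> \<sigma>) A"
  unfolding base_independent_def
proof (intro allI impI ballI)
  fix t i
  assume sum0: "(\<Sum>i\<in>A. to_ac (t i) * (e \<circ> \<sigma>) i) = 0" and "i \<in> A"
  let ?t' = "\<lambda>r. t (the_inv_into A \<sigma> r)"
  have "(\<Sum>r\<in>\<sigma> ` A. to_ac (?t' r) * e r) = 0"
    using sum0 assms(2) by (simp add: sum.reindex the_inv_into_f_f)
  from base_independent_zero[OF assms(1) this, of "\<sigma> i"] show "t i = 0"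
    using assms(2) \<open>i \<in> A\<close> by (simp add: the_inv_into_f_f)
qed

definition base_span :: "('i \<Rightarrow> 'a::field alg_closure) \<Rightarrow> 'i set \<Rightarrow> 'a alg_closure set" where
  "base_span e A = (\<lambda>t. \<Sum>i\<in>A. to_ac (t i) * e i) ` (A \<rightarrow>\<^sub>E UNIV)"

lemma sum_in_base_span: "(\<Sum>i\<in>A. to_ac (t i) * e i) \<in> base_span e A"
  unfolding base_span_def by (rule image_eqI[of _ _ "restrict t A"]) (auto intro: sum.cong)

lemma finite_base_span:
  fixes e :: "'i \<Rightarrow> 'a::{field,finite} alg_closure"
  shows "finite A \<Longrightarrow> finite (base_span e A)"
  by (simp add: base_span_def finite_PiE)

lemma card_base_span_le:
  fixes e :: "'i \<Rightarrow> 'a::{field,finite} alg_closure"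
  assumes "finite A"
  shows "card (base_span e A) \<le> CARD('a) ^ card A"
  unfolding base_span_def using card_image_le[of "A \<rightarrow>\<^sub>E (UNIV :: 'a set)"] assms
  by (simp add: card_PiE finite_PiE)

lemma card_base_span:
  fixes e :: "'i \<Rightarrow> 'a::{field,finite} alg_closure"
  assumes "base_independent e A" "finite A"
  shows "card (base_span e A) = CARD('a) ^ card A"
proof -
  have "inj_on (\<lambda>t. \<Sum>i\<in>A. to_ac (t i) * e i) (A \<rightarrow>\<^sub>E UNIV)"
    by (rule inj_onI, rule PiE_ext) (use base_independent_eq[OF assms(1)] in auto)
  thus ?thesis
    using assms(2) by (simp add: base_span_def card_image card_PiE)
qed

lemma base_independent_insert:
  assumes "base_independent e F" "finite F" "s \<notin> F" "y \<notin> base_span e F"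
  shows "base_independent (e(s := y)) (insert s F)"
  unfolding base_independent_def
proof (intro allI impI)
  fix t
  assume "(\<Sum>i\<in>insert s F. to_ac (t i) * (e(s := y)) i) = 0"
  moreover have "(\<Sum>i\<in>F. to_ac (t i) * (e(s := y)) i) = (\<Sum>i\<in>F. to_ac (t i) * e i)"
    using assms(3) by (intro sum.cong) auto
  ultimately have sum0: "to_ac (t s) * y + (\<Sum>i\<in>F. to_ac (t i) * e i) = 0"
    using assms(2,3) by simp
  have "t s = 0"
  proof (rule ccontr)
    assume "t s \<noteq> 0"
    hence "y = (\<Sum>i\<in>F. to_ac (- t i / t s) * e i)"
      using sum0 by (simp add: sum_divide_distrib[symmetric] sum_negf field_simps add_eq_0_iff2)
    with assms(4) show False
      using sum_in_base_span by metis
  qed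
  with sum0 have "\<forall>i\<in>F. t i = 0"
    using base_independent_zero[OF assms(1)] by simp
  with \<open>t s = 0\<close> show "\<forall>i\<in>insert s F. t i = 0"
    by simp
qed

lemma ex_base_independent:
  fixes K :: "'a::{field,finite} alg_closure set"
  assumes "finite A" "finite K" "CARD('a) ^ card A \<le> card K"
  shows "\<exists>e. (\<forall>i. e i \<in> K) \<and> base_independent e A"
  using assms
proof (induction A rule: finite_induct)
  case empty
  then obtain y where "y \<in> K"
    by fastforce
  thus ?case
    by (intro exI[of _ "\<lambda>_. y"]) (simp add: base_independent_def)
next
  case (insert s F)
  have "1 < CARD('a)"
    using finite_field_card_ge_2[where 'a='a] by simp
  hence "CARD('a) ^ card F < CARD('a) ^ card (insert s F)"
    using insert.hyps by (intro power_strict_increasing) auto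
  with insert.prems(2) obtain e where eK: "\<forall>i. e i \<in> K" and indep: "base_independent e F"
    using insert.IH insert.prems(1) by fastforce
  have "card (base_span e F) < card K"
    using card_base_span_le[OF insert.hyps(1), of e] \<open>CARD('a) ^ card F < _\<close> insert.prems(2)
    by linarith
  hence "\<not> K \<subseteq> base_span e F"
    using finite_base_span[OF insert.hyps(1)] by (metis card_mono not_le)
  then obtain y where "y \<in> K" "y \<notin> base_span e F"
    by blast
  hence "base_independent (e(s := y)) (insert s F)"
    by (intro base_independent_insert[OF indep insert.hyps(1,2)])
  moreover have "\<forall>i. (e(s := y)) i \<in> K"
    using eK \<open>y \<in> K\<close> by simp
  ultimately show ?case
    by blast
qed

section \<open>Linearized polynomials\<close>

definition lin_poly ::
    "nat \<Rightarrow> (nat \<Rightarrow> 'a::{field,finite} alg_closure) \<Rightarrow> 'a alg_closure \<Rightarrow> 'a alg_closure" where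
  "lin_poly k c x = (\<Sum>i<k. c i * x ^ (CARD('a) ^ i))"

lemma lin_poly_add: "lin_poly k c (x + y) = lin_poly k c x + lin_poly k c y"
  by (simp add: lin_poly_def alg_closure_add_power_card_power distrib_left sum.distrib)

lemma lin_poly_to_ac_mult: "lin_poly k c (to_ac a * x) = to_ac a * lin_poly k c x"
proof -
  have "to_ac a ^ (CARD('a) ^ i) = to_ac a" for i
    using to_ac_in_frob_fixed[of a i] by (simp add: frob_fixed_def)
  thus ?thesis
    by (simp add: lin_poly_def power_mult_distrib sum_distrib_left mult_ac)
qed

lemma lin_poly_zero [simp]: "lin_poly k c 0 = 0"
  by (simp add: lin_poly_def power_0_left)

lemma lin_poly_sum: "lin_poly k c (\<Sum>j\<in>A. f j) = (\<Sum>j\<in>A. lin_poly k c (f j))"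
  by (induction A rule: infinite_finite_induct) (simp_all add: lin_poly_add)

lemma lin_poly_coeff_diff: "lin_poly k (\<lambda>i. c i - c' i) x = lin_poly k c x - lin_poly k c' x"
  by (simp add: lin_poly_def sum_subtractf left_diff_distrib)

lemma lin_poly_in_frob_fixed:
  assumes "\<And>i. i < k \<Longrightarrow> c i \<in> frob_fixed N" and "x \<in> frob_fixed N"
  shows "lin_poly k c x \<in> frob_fixed N"
  unfolding lin_poly_def
proof (intro frob_fixed_sum frob_fixed_mult)
  fix i assume "i \<in> {..<k}"
  thus "c i \<in> frob_fixed N"
    using assms(1) by simp
  have "(x ^ (CARD('a) ^ i)) ^ (CARD('a) ^ N) = (x ^ (CARD('a) ^ N)) ^ (CARD('a) ^ i)"
    by (simp flip: power_mult add: mult.commute)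
  thus "x ^ (CARD('a) ^ i) \<in> frob_fixed N"
    using assms(2) by (simp add: frob_fixed_def)
qed

text \<open>A nonzero linearized polynomial of \<open>q\<close>-degree below \<open>k\<close> is a nonzero polynomial of degree
  at most \<open>q\<^sup>k\<^sup>-\<^sup>1\<close>.\<close>
lemma card_lin_poly_roots:
  fixes c :: "nat \<Rightarrow> 'a::{field,finite} alg_closure"
  assumes "i0 < k" "c i0 \<noteq> 0"
  shows "finite {x. lin_poly k c x = 0}" and "card {x. lin_poly k c x = 0} \<le> CARD('a) ^ (k - 1)"
proof -
  define q where "q = CARD('a)"
  have "1 < q"
    using finite_field_card_ge_2[where 'a='a] by (simp add: q_def)
  define P where "P = (\<Sum>i<k. Polynomial.monom (c i) (q ^ i))"
  have roots: "{x. lin_poly k c x = 0} = {x. poly P x = 0}"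
    by (simp add: P_def lin_poly_def poly_sum poly_monom q_def)
  have "poly.coeff P (q ^ i0) = c i0"
    unfolding P_def coeff_sum using \<open>1 < q\<close> assms(1) by (simp add: power_inject_exp)
  hence "P \<noteq> 0"
    using assms(2) by auto
  have "Polynomial.degree P \<le> q ^ (k - 1)"
    unfolding P_def using \<open>1 < q\<close>
    by (intro degree_sum_le) (auto intro!: order.trans[OF degree_monom_le] power_increasing)
  thus "finite {x. lin_poly k c x = 0}" and "card {x. lin_poly k c x = 0} \<le> CARD('a) ^ (k - 1)"
    using poly_roots_finite[OF \<open>P \<noteq> 0\<close>] card_poly_roots_bound[OF \<open>P \<noteq> 0\<close>]
    unfolding roots q_def by simp_all
qed

lemma lin_poly_coeffs_eq_0_if_vanishes:
  fixes g :: "'i \<Rightarrow> 'a::{field,finite} alg_closure"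
  assumes "base_independent g I" "finite I" "k \<le> card I"
    and vanish: "\<And>j. j \<in> I \<Longrightarrow> lin_poly k c (g j) = 0" and "i < k"
  shows "c i = 0"
proof (rule ccontr)
  assume "c i \<noteq> 0"
  have "base_span g I \<subseteq> {x. lin_poly k c x = 0}"
    by (auto simp: base_span_def lin_poly_sum lin_poly_to_ac_mult vanish)
  hence "card (base_span g I) \<le> card {x. lin_poly k c x = 0}"
    using card_lin_poly_roots(1)[of i k c, OF \<open>i < k\<close> \<open>c i \<noteq> 0\<close>] by (rule card_mono[rotated])
  also have "\<dots> \<le> CARD('a) ^ (k - 1)"
    by (rule card_lin_poly_roots(2)[of i k c, OF \<open>i < k\<close> \<open>c i \<noteq> 0\<close>])
  also have "\<dots> < CARD('a) ^ card I"
    using finite_field_card_ge_2[where 'a='a] \<open>i < k\<close> assms(3) by (intro power_strict_increasing) auto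
  finally show False
    by (simp add: card_base_span[OF assms(1,2)])
qed

text \<open>Evaluation at \<open>k\<close> independent points maps the \<open>k\<close>-tuples of coefficients in the field
  \<open>K\<close> of order \<open>q\<^sup>N\<close> injectively, hence bijectively, onto the \<open>k\<close>-tuples of values in \<open>K\<close>.\<close>
lemma lin_poly_interpolation:
  fixes g :: "'i \<Rightarrow> 'a::{field,finite} alg_closure"
  assumes "N \<ge> 1" "base_independent g I" "finite I" "card I = k"
    and "\<And>j. j \<in> I \<Longrightarrow> g j \<in> frob_fixed N" and "\<And>j. j \<in> I \<Longrightarrow> x j \<in> frob_fixed N"
  shows "\<exists>c. (\<forall>i<k. c i \<in> frob_fixed N) \<and> (\<forall>j\<in>I. lin_poly k c (g j) = x j)"
proof -
  define K :: "'a alg_closure set" where "K = frob_fixed N"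
  define \<Psi> where "\<Psi> = (\<lambda>c. restrict (\<lambda>j. lin_poly k c (g j)) I)"
  have "inj_on \<Psi> ({..<k} \<rightarrow>\<^sub>E K)"
  proof (rule inj_onI, rule PiE_ext)
    fix c1 c2 i
    assume "c1 \<in> {..<k} \<rightarrow>\<^sub>E K" "c2 \<in> {..<k} \<rightarrow>\<^sub>E K" "\<Psi> c1 = \<Psi> c2" "i \<in> {..<k}"
    hence "lin_poly k (\<lambda>i. c1 i - c2 i) (g j) = 0" if "j \<in> I" for j
      using that by (simp add: \<Psi>_def lin_poly_coeff_diff fun_eq_iff) (metis restrict_apply')
    from lin_poly_coeffs_eq_0_if_vanishes[OF assms(2,3) _ this] \<open>i \<in> {..<k}\<close> assms(4)
    show "c1 i = c2 i"
      by simp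
  qed
  moreover have "\<Psi> ` ({..<k} \<rightarrow>\<^sub>E K) \<subseteq> I \<rightarrow>\<^sub>E K"
    using assms(5) by (auto simp: \<Psi>_def K_def intro!: lin_poly_in_frob_fixed)
  moreover have "finite K"
    unfolding K_def by (rule card_frob_fixed(1)[OF assms(1)])
  ultimately have "\<Psi> ` ({..<k} \<rightarrow>\<^sub>E K) = I \<rightarrow>\<^sub>E K"
    using assms(3,4) by (intro card_subset_eq) (simp_all add: finite_PiE card_image card_PiE)
  moreover have "restrict x I \<in> I \<rightarrow>\<^sub>E K"
    using assms(6) by (simp add: K_def)
  ultimately obtain c where "c \<in> {..<k} \<rightarrow>\<^sub>E K" "\<Psi> c = restrict x I"
    by (metis imageE)
  thus ?thesis
    by (intro exI[of _ c]) (auto simp: K_def \<Psi>_def fun_eq_iff split: if_splits)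
qed

section \<open>Rank over a finite field\<close>

lemma rank_le_card_nonzero_columns:
  fixes D :: "'a::field^'n^'m"
  assumes "\<And>i j. j \<notin> J \<Longrightarrow> D $ i $ j = 0"
  shows "rank D \<le> card J"
proof -
  have "rows D \<subseteq> vec.span ((\<lambda>j. axis j 1) ` J)"
  proof
    fix x assume "x \<in> rows D"
    then obtain i where x: "x = row i D"
      by (auto simp: rows_def)
    have "x = (\<Sum>j\<in>J. D $ i $ j *s axis j (1::'a))"
    proof (rule vec_eq_iff[THEN iffD2], rule allI)
      fix k
      have "(\<Sum>j\<in>J. D $ i $ j *s axis j (1::'a)) $ k = (\<Sum>j\<in>J. if j = k then D $ i $ j else 0)"
        unfolding sum_component by (rule sum.cong) (auto simp: axis_def)
      also have "\<dots> = x $ k"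
        using assms by (auto simp: x row_def sum.delta')
      finally show "x $ k = (\<Sum>j\<in>J. D $ i $ j *s axis j (1::'a)) $ k"
        by simp
    qed
    also have "\<dots> \<in> vec.span ((\<lambda>j. axis j 1) ` J)"
      by (intro vec.span_sum vec.span_scale vec.span_base) auto
    finally show "x \<in> vec.span ((\<lambda>j. axis j 1) ` J)" .
  qed
  hence "rank D \<le> card ((\<lambda>j. axis j (1::'a)) ` J)"
    unfolding row_rank_def_gen by (rule vec.dim_le_card) simp
  also have "\<dots> \<le> card J"
    by (rule card_image_le) simp
  finally show ?thesis .
qed

text \<open>The row space has a basis \<open>B\<close> of \<open>rank D\<close> vectors, and \<open>D *v v\<close> only depends on the inner
  products of \<open>v\<close> with the elements of \<open>B\<close>.\<close>
lemma card_range_matrix_vector_mult: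
  fixes D :: "'a::{field,finite}^'n^'m"
  shows "card (range ((*v) D)) \<le> CARD('a) ^ rank D"
proof -
  obtain B where B: "B \<subseteq> rows D" "rows D \<subseteq> vec.span B" "card B = rank D"
    unfolding row_rank_def_gen by (metis vec.basis_exists)
  have "\<exists>u. D $ i = (\<Sum>b\<in>B. u b *s b)" for i
  proof -
    have "D $ i \<in> rows D"
      by (auto simp: rows_def row_def vec_eq_iff intro!: exI[of _ i])
    thus ?thesis
      using B(2) vec.span_finite[of B] by auto
  qed
  then obtain \<alpha> where \<alpha>: "\<And>i. D $ i = (\<Sum>b\<in>B. \<alpha> i b *s b)"
    by metis
  define G where "G = (\<lambda>t::'a^'n \<Rightarrow> 'a. \<chi> i. \<Sum>b\<in>B. \<alpha> i b * t b)"
  have "D *v v = G (restrict (\<lambda>b. \<Sum>j\<in>UNIV. b $ j * v $ j) B)" for v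
  proof -
    have "(D *v v) $ i = (\<Sum>b\<in>B. \<alpha> i b * (\<Sum>j\<in>UNIV. b $ j * v $ j))" for i
      by (simp add: matrix_vector_mult_def \<alpha> sum_distrib_left sum_distrib_right mult.assoc
          sum.swap[of _ UNIV])
    thus ?thesis
      by (simp add: G_def vec_eq_iff)
  qed
  hence "range ((*v) D) \<subseteq> G ` (B \<rightarrow>\<^sub>E UNIV)"
    by auto
  hence "card (range ((*v) D)) \<le> card (G ` (B \<rightarrow>\<^sub>E (UNIV :: 'a set)))"
    by (intro card_mono) simp_all
  also have "\<dots> \<le> card (B \<rightarrow>\<^sub>E (UNIV :: 'a set))"
    by (rule card_image_le) (simp add: finite_PiE)
  also have "\<dots> = CARD('a) ^ rank D"
    by (simp add: card_PiE B(3))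
  finally show ?thesis .
qed

lemma card_UNIV_le_card_range_mult_card_kernel:
  fixes D :: "'a::{field,finite}^'n^'m"
  shows "CARD('a) ^ CARD('n) \<le> card (range ((*v) D)) * card {v. D *v v = 0}"
proof -
  have fibre: "card {v. D *v v = y} \<le> card {v. D *v v = 0}" if y: "y \<in> range ((*v) D)" for y
  proof -
    obtain v0 where "D *v v0 = y"
      using y by blast
    hence "(\<lambda>v. v - v0) ` {v. D *v v = y} \<subseteq> {v. D *v v = 0}"
      by (auto simp: matrix_vector_mult_diff_distrib)
    moreover have "inj_on (\<lambda>v. v - v0) {v. D *v v = y}"
      by (rule inj_onI) simp
    ultimately show ?thesis
      by (intro card_inj_on_le) simp_all
  qed
  have "CARD('a) ^ CARD('n) = card (UNIV :: ('a^'n) set)"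
    by (simp add: CARD_vec)
  also have "UNIV = (\<Union>y\<in>range ((*v) D). {v. D *v v = y})"
    by auto
  also have "card \<dots> \<le> (\<Sum>y\<in>range ((*v) D). card {v. D *v v = y})"
    by (rule card_UN_le) simp
  also have "\<dots> \<le> (\<Sum>y\<in>range ((*v) D). card {v. D *v v = 0})"
    by (rule sum_mono) (rule fibre)
  also have "\<dots> = card (range ((*v) D)) * card {v. D *v v = 0}"
    by simp
  finally show ?thesis .
qed

lemma rank_ge_if_card_kernel_le:
  fixes D :: "'a::{field,finite}^'n^'m"
  assumes "card {v. D *v v = 0} \<le> CARD('a) ^ s"
  shows "CARD('n) \<le> rank D + s"
proof -
  have "CARD('a) ^ CARD('n) \<le> card (range ((*v) D)) * card {v. D *v v = 0}"
    by (rule card_UNIV_le_card_range_mult_card_kernel)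
  also have "\<dots> \<le> CARD('a) ^ rank D * CARD('a) ^ s"
    by (intro mult_mono card_range_matrix_vector_mult assms) simp_all
  also have "\<dots> = CARD('a) ^ (rank D + s)"
    by (simp add: power_add)
  finally show ?thesis
    using finite_field_card_ge_2[where 'a='a] by (simp add: power_increasing_iff)
qed

definition ac_column :: "('m \<Rightarrow> 'a::field alg_closure) \<Rightarrow> 'a^'n^'m \<Rightarrow> 'n \<Rightarrow> 'a alg_closure" where
  "ac_column e M j = (\<Sum>r\<in>UNIV. to_ac (M $ r $ j) * e r)"

lemma ac_column_diff: "ac_column e (M1 - M2) j = ac_column e M1 j - ac_column e M2 j"
  by (simp add: ac_column_def left_diff_distrib sum_subtractf)

lemma ac_column_in_frob_fixed: "(\<And>r. e r \<in> frob_fixed N) \<Longrightarrow> ac_column e M j \<in> frob_fixed N"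
  unfolding ac_column_def by (intro frob_fixed_sum frob_fixed_mult to_ac_in_frob_fixed)

lemma sum_to_ac_matrix_vector_mult:
  fixes D :: "'a::field^'n^'m" and e :: "'m \<Rightarrow> 'a alg_closure"
  shows "(\<Sum>r\<in>UNIV. to_ac ((D *v v) $ r) * e r) = (\<Sum>j\<in>UNIV. to_ac (v $ j) * ac_column e D j)"
proof -
  have "(\<Sum>r\<in>UNIV. to_ac ((D *v v) $ r) * e r) =
      (\<Sum>r\<in>UNIV. \<Sum>j\<in>UNIV. to_ac (v $ j) * (to_ac (D $ r $ j) * e r))"
    by (simp add: matrix_vector_mult_def to_ac_sum sum_distrib_left sum_distrib_right mult_ac)
  also have "\<dots> = (\<Sum>j\<in>UNIV. \<Sum>r\<in>UNIV. to_ac (v $ j) * (to_ac (D $ r $ j) * e r))"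
    by (rule sum.swap)
  finally show ?thesis
    by (simp add: ac_column_def sum_distrib_left)
qed

text \<open>The Gabidulin bound: the kernel of \<open>D\<close> embeds into the roots of the linearized
  polynomial.\<close>
lemma rank_gt_if_columns_lin_poly:
  fixes D :: "'a::{field,finite}^'n^'m"
    and e :: "'m \<Rightarrow> 'a alg_closure" and g :: "'n \<Rightarrow> 'a alg_closure"
  assumes "base_independent e UNIV" "base_independent g UNIV"
    and columns: "\<And>j. ac_column e D j = lin_poly k c (g j)"
    and "D \<noteq> 0"
  shows "CARD('n) < rank D + k"
proof -
  have "\<exists>i0<k. c i0 \<noteq> 0"
  proof (rule ccontr)
    assume "\<not> (\<exists>i0<k. c i0 \<noteq> 0)"
    hence "lin_poly k c x = 0" for x
      by (simp add: lin_poly_def)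
    hence "D $ r $ j = 0" for r j
      using base_independent_zero[OF assms(1), of "\<lambda>r. D $ r $ j"] columns by (simp add: ac_column_def)
    with \<open>D \<noteq> 0\<close> show False
      by (simp add: vec_eq_iff)
  qed
  then obtain i0 where "i0 < k" "c i0 \<noteq> 0"
    by blast
  define H where "H = (\<lambda>v::'a^'n. \<Sum>j\<in>UNIV. to_ac (v $ j) * g j)"
  have "H ` {v. D *v v = 0} \<subseteq> {x. lin_poly k c x = 0}"
  proof clarify
    fix v :: "'a^'n" assume "D *v v = 0"
    have "lin_poly k c (H v) = (\<Sum>r\<in>UNIV. to_ac ((D *v v) $ r) * e r)"
      by (simp add: H_def lin_poly_sum lin_poly_to_ac_mult columns sum_to_ac_matrix_vector_mult)
    thus "lin_poly k c (H v) = 0"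
      using \<open>D *v v = 0\<close> by simp
  qed
  moreover have "inj H"
    by (rule injI) (use base_independent_eq[OF assms(2)] in \<open>auto simp: H_def vec_eq_iff\<close>)
  ultimately have "card {v. D *v v = 0} \<le> card {x. lin_poly k c x = 0}"
    using card_lin_poly_roots(1)[of i0 k c, OF \<open>i0 < k\<close> \<open>c i0 \<noteq> 0\<close>]
    by (intro card_inj_on_le) (auto intro: inj_on_subset)
  also have "\<dots> \<le> CARD('a) ^ (k - 1)"
    by (rule card_lin_poly_roots(2)[of i0 k c, OF \<open>i0 < k\<close> \<open>c i0 \<noteq> 0\<close>])
  finally have "CARD('n) \<le> rank D + (k - 1)"
    by (rule rank_ge_if_card_kernel_le)
  thus ?thesis
    using \<open>i0 < k\<close> by linarith
qed

text \<open>The difference of the two matrices is a Gabidulin codeword.\<close>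
lemma rank_gt_if_residues_agree:
  fixes M1 M2 :: "'a::{field,finite}^'n^'m"
  assumes "base_independent e UNIV" "base_independent g UNIV" "M1 \<noteq> M2"
    and "\<And>j. j \<notin> J \<Longrightarrow> lin_poly k c (g j) = ac_column e M1 j"
    and "\<And>j. j \<notin> J \<Longrightarrow> lin_poly k c' (g j) = ac_column e M2 j"
    and "\<And>j. j \<in> J \<Longrightarrow>
      ac_column e M1 j - lin_poly k c (g j) = ac_column e M2 j - lin_poly k c' (g j)"
  shows "CARD('n) < rank (M1 - M2) + k"
proof (rule rank_gt_if_columns_lin_poly[OF assms(1,2)])
  show "ac_column e (M1 - M2) j = lin_poly k (\<lambda>i. c i - c' i) (g j)" for j
    using assms(4-6)[of j]
    by (cases "j \<in> J") (simp_all add: ac_column_diff lin_poly_coeff_diff algebra_simps)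
  show "M1 - M2 \<noteq> 0"
    using assms(3) by simp
qed

section \<open>Distance colourings\<close>

lemma dist_coloring_colours_ge:
  fixes \<Gamma> :: "'a::{field,finite}^'n::finite^'m::finite \<Rightarrow> nat"
  assumes "d \<le> CARD('n)" and "is_dist_coloring d L \<Gamma>"
  shows "CARD('a) ^ (CARD('m) * d) \<le> L"
proof -
  obtain J :: "'n set" where J: "card J = d"
    using obtain_subset_with_card_n[of d "UNIV :: 'n set"] assms(1) by auto
  define F where "F = (\<lambda>f::'m \<times> 'n \<Rightarrow> 'a. (\<chi> i j. if j \<in> J then f (i, j) else 0) :: 'a^'n^'m)"
  define P :: "('m \<times> 'n \<Rightarrow> 'a) set" where "P = (UNIV \<times> J) \<rightarrow>\<^sub>E UNIV"
  have "inj_on F P"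
  proof (rule inj_onI)
    fix f g assume "f \<in> P" "g \<in> P" "F f = F g"
    hence "f (i, j) = g (i, j)" if "j \<in> J" for i j
      using that by (simp add: F_def vec_eq_iff) (metis (full_types))
    with \<open>f \<in> P\<close> \<open>g \<in> P\<close> show "f = g"
      unfolding P_def by (intro PiE_ext) auto
  qed
  hence "CARD('a) ^ (CARD('m) * d) = card (F ` P)"
    by (simp add: card_image P_def card_PiE card_cartesian_product J)
  also have "\<dots> = card (\<Gamma> ` F ` P)"
  proof (rule card_image[symmetric], rule inj_onI, rule ccontr)
    fix M1 M2 assume "M1 \<in> F ` P" "M2 \<in> F ` P" "\<Gamma> M1 = \<Gamma> M2" "M1 \<noteq> M2"
    moreover from \<open>M1 \<in> F ` P\<close> \<open>M2 \<in> F ` P\<close> have "rank (M1 - M2) \<le> d"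
      using rank_le_card_nonzero_columns[of J "M1 - M2"] J by (auto simp: F_def)
    ultimately show False
      using assms(2) by (auto simp: is_dist_coloring_def rank_dist_def)
  qed
  also have "\<dots> \<le> card {1..L}"
    using assms(2) by (intro card_mono) (auto simp: is_dist_coloring_def)
  finally show ?thesis
    by simp
qed

lemma ex_dist_coloring_if_separating:
  fixes f :: "'a::field^'n^'m \<Rightarrow> 'b"
  assumes "finite S" "card S \<le> L" "\<And>M. f M \<in> S"
    and "\<And>M1 M2. M1 \<noteq> M2 \<Longrightarrow> rank_dist M1 M2 \<le> d \<Longrightarrow> f M1 \<noteq> f M2"
  shows "\<exists>\<Gamma> :: 'a^'n^'m \<Rightarrow> nat. is_dist_coloring d L \<Gamma>"
proof -
  obtain \<phi> where \<phi>: "bij_betw \<phi> S {0..<card S}"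
    using ex_bij_betw_finite_nat[OF assms(1)] by blast
  have "is_dist_coloring d L (\<lambda>M. Suc (\<phi> (f M)))"
    unfolding is_dist_coloring_def
  proof (intro conjI allI impI)
    show "Suc (\<phi> (f M)) \<in> {1..L}" for M
      using bij_betw_apply[OF \<phi> assms(3)[of M]] assms(2) by simp
    show "Suc (\<phi> (f M1)) \<noteq> Suc (\<phi> (f M2))" if "M1 \<noteq> M2 \<and> rank_dist M1 M2 \<le> d" for M1 M2
      using that assms(3,4) bij_betw_imp_inj_on[OF \<phi>] by (auto dest: inj_onD)
  qed
  thus ?thesis
    by blast
qed

lemma ex_base_independent_frob_fixed:
  assumes "CARD('n::finite) \<le> CARD('m::finite)"
  obtains e :: "'m::finite \<Rightarrow> 'a::{field,finite} alg_closure" and g :: "'n::finite \<Rightarrow> 'a alg_closure"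
  where "\<And>r. e r \<in> frob_fixed CARD('m)" "base_independent e UNIV"
    and "\<And>j. g j \<in> frob_fixed CARD('m)" "base_independent g UNIV"
proof -
  have "finite (frob_fixed CARD('m) :: 'a alg_closure set)"
    and "card (frob_fixed CARD('m) :: 'a alg_closure set) = CARD('a) ^ CARD('m)"
    by (rule card_frob_fixed; simp add: Suc_leI)+
  then obtain e :: "'m \<Rightarrow> 'a alg_closure" where "\<And>r. e r \<in> frob_fixed CARD('m)" "base_independent e UNIV"
    using ex_base_independent[of "UNIV :: 'm set" "frob_fixed CARD('m) :: 'a alg_closure set"] by auto
  moreover obtain \<sigma> :: "'n \<Rightarrow> 'm" where "inj \<sigma>"
    using card_le_inj[of "UNIV :: 'n set" "UNIV :: 'm set"] assms by auto
  moreover have "base_independent e (range \<sigma>)"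
    using \<open>base_independent e UNIV\<close> by (rule base_independent_subset) auto
  with \<open>inj \<sigma>\<close> have "base_independent (e \<circ> \<sigma>) UNIV"
    by (intro base_independent_comp)
  ultimately show ?thesis
    using that[of e "e \<circ> \<sigma>"] by simp
qed

lemma ex_dist_coloring:
  assumes "CARD('n::finite) \<le> CARD('m::finite)" and "d \<le> CARD('n)"
  shows "\<exists>\<Gamma> :: 'a::{field,finite}^'n^'m \<Rightarrow> nat. is_dist_coloring d (CARD('a) ^ (CARD('m) * d)) \<Gamma>"
proof -
  define K :: "'a alg_closure set" where "K = frob_fixed CARD('m)"
  obtain e :: "'m \<Rightarrow> 'a alg_closure" and g :: "'n \<Rightarrow> 'a alg_closure"
    where eK: "\<And>r. e r \<in> K" and e: "base_independent e UNIV"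
      and gK: "\<And>j. g j \<in> K" and g: "base_independent g UNIV"
    using ex_base_independent_frob_fixed[OF assms(1)] unfolding K_def by metis
  obtain J :: "'n set" where "card J = d"
    using obtain_subset_with_card_n[of d "UNIV :: 'n set"] assms(2) by auto
  define k where "k = CARD('n) - d"
  have "card (- J) = k"
    using \<open>card J = d\<close> by (simp add: k_def Compl_eq_Diff_UNIV card_Diff_subset)
  have "\<exists>c. (\<forall>i<k. c i \<in> K) \<and> (\<forall>j\<in>-J. lin_poly k c (g j) = ac_column e M j)" for M
    unfolding K_def using base_independent_subset[OF g] \<open>card (- J) = k\<close> eK gK
    by (intro lin_poly_interpolation ac_column_in_frob_fixed) (auto simp: K_def Suc_leI)
  then obtain cf where cfK: "\<And>M i. i < k \<Longrightarrow> cf M i \<in> K"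
    and cf: "\<And>M j. j \<notin> J \<Longrightarrow> lin_poly k (cf M) (g j) = ac_column e M j"
    by (metis ComplI)
  define colour where "colour M = restrict (\<lambda>j. ac_column e M j - lin_poly k (cf M) (g j)) J" for M
  show ?thesis
  proof (rule ex_dist_coloring_if_separating)
    have "finite K" "card K = CARD('a) ^ CARD('m)"
      unfolding K_def by (rule card_frob_fixed; simp add: Suc_leI)+
    thus "finite (J \<rightarrow>\<^sub>E K)" "card (J \<rightarrow>\<^sub>E K) \<le> CARD('a) ^ (CARD('m) * d)"
      by (simp_all add: finite_PiE card_PiE \<open>card J = d\<close> power_mult)
    show "colour M \<in> J \<rightarrow>\<^sub>E K" for M
      using cfK eK gK unfolding colour_def K_def
      by (auto intro!: frob_fixed_diff lin_poly_in_frob_fixed ac_column_in_frob_fixed)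
    fix M1 M2 :: "'a^'n^'m"
    assume "M1 \<noteq> M2" "rank_dist M1 M2 \<le> d"
    show "colour M1 \<noteq> colour M2"
    proof
      assume same_colour: "colour M1 = colour M2"
      have "CARD('n) < rank (M1 - M2) + k"
      proof (rule rank_gt_if_residues_agree[OF e g \<open>M1 \<noteq> M2\<close>,
            where J = J and c = "cf M1" and c' = "cf M2"])
        show "lin_poly k (cf M1) (g j) = ac_column e M1 j" "lin_poly k (cf M2) (g j) = ac_column e M2 j"
          if "j \<notin> J" for j
          using cf[OF that] by simp_all
        show "ac_column e M1 j - lin_poly k (cf M1) (g j) = ac_column e M2 j - lin_poly k (cf M2) (g j)"
          if "j \<in> J" for j
          using fun_cong[OF same_colour, of j] that by (simp add: colour_def)
      qed
      with \<open>rank_dist M1 M2 \<le> d\<close> assms(2) show False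
        by (simp add: rank_dist_def k_def)
    qed
  qed
qed

theorem theorem3p1:
  fixes d :: nat
  assumes "CARD('m::finite) \<ge> CARD('n::finite)"
    and "1 \<le> d" and "d \<le> CARD('n)"
  shows "chi_dist d TYPE('a::{field,finite}^'n^'m) = CARD('a) ^ (CARD('m) * d)"
  unfolding chi_dist_def
proof (rule Least_equality)
  show "\<exists>\<Gamma> :: 'a^'n^'m \<Rightarrow> nat. is_dist_coloring d (CARD('a) ^ (CARD('m) * d)) \<Gamma>"
    by (rule ex_dist_coloring[OF assms(1,3)])
  show "CARD('a) ^ (CARD('m) * d) \<le> L" if "\<exists>\<Gamma> :: 'a^'n^'m \<Rightarrow> nat. is_dist_coloring d L \<Gamma>" for L
    using that dist_coloring_colours_ge[OF assms(3)] by blast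
qed

end
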